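(* Let $G_0^*$ and $G_1^*$ be $k$-uniform hypergraphs on $n$ and $m$ vertices respectively, and let $\mathcal{A}$ be their corona matrix. Then for every real $\lambda$ that is not an eigenvalue of $A(G_1^* )$, $$P_{\mathcal{A}}(\lambda)=\big(P_{A(G_1^* )}(\lambda)\big)^n\,P_{A(G_0^* )}\Big(\lambda+\binom{m-1}{k-2}^2\chi_{A(G_1^* )}(\lambda)\Big).$$
   Context: All hypergraphs are finite and simple: a hypergraph $G^*=(V,E)$ consists of a finite vertex set $V$ and a set $E$ of subsets of $V$ (hyperedges), each of size at least $2$. It is $k$-uniform if every hyperedge has exactly $k$ elements. For a hypergraph with vertices $v_1,\dots,v_n$, the adjacency matrix $A(G^* )$ is the $n\times n$ matrix whose $(i,j)$ entry, for $i\ne j$, is the number of hyperedges containing both $v_i$ and $v_j$, and whose diagonal entries are $0$. $J_{a,b}$ is the all-ones $a\times b$ matrix, $I_n$ the identity, $\otimes$ the Kronecker product. For a square matrix $M$, $P_M(\lambda)=\det(M-\lambda I)$. Binomial coefficients $\binom{x}{y}$ with integers $x\ge 0$ and $y$ are $0$ when $y<0$ or $y>x$. Coronal: for an $n\times n$ matrix $M$ and real $\lambda$ with $M-\lambda I_n$ invertible, $\chi_M(\lambda)=J_{1,n}(M-\lambda I_n)^{-1}J_{n,1}$, the sum of all entries of $(M-\lambda I_n)^{-1}$. Corona matrix: for $k$-uniform hypergraphs $G_0^*$ on $n$ vertices and $G_1^*$ on $m$ vertices, with $b=\binom{m-1}{k-2}$, the corona matrix is $$\mathcal{A}=\begin{bmatrix}A(G_0^*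 ) & b\,(J_{1,m}\otimes I_n)\\ b\,(J_{m,1}\otimes I_n) & A(G_1^* )\otimes I_n\end{bmatrix}.$$ *)

theory Defs
  imports "Jordan_Normal_Form.Gauss_Jordan_Elimination" "Jordan_Normal_Form.Char_Poly"
begin

definition hypergraph :: "nat \<Rightarrow> nat set set \<Rightarrow> bool" where
  "hypergraph n E \<longleftrightarrow> (\<forall>e\<in>E. e \<subseteq> {0..<n} \<and> card e \<ge> 2)"

definition k_uniform :: "nat \<Rightarrow> nat set set \<Rightarrow> bool" where
  "k_uniform k E \<longleftrightarrow> (\<forall>e\<in>E. card e = k)"

definition hyp_adj :: "nat \<Rightarrow> nat set set \<Rightarrow> real mat" where
  "hyp_adj n E = mat n n (\<lambda>(i,j). if i = j then 0 else real (card {e\<in>E. i \<in> e \<and> j \<in> e}))"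

definition kron :: "'a::times mat \<Rightarrow> 'a mat \<Rightarrow> 'a mat" where
  "kron A B = mat (dim_row A * dim_row B) (dim_col A * dim_col B)
     (\<lambda>(i,j). A $$ (i div dim_row B, j div dim_col B) * B $$ (i mod dim_row B, j mod dim_col B))"

definition ones_mat :: "nat \<Rightarrow> nat \<Rightarrow> real mat" where
  "ones_mat a b = mat a b (\<lambda>_. 1)"

definition charP :: "real mat \<Rightarrow> real \<Rightarrow> real" where
  "charP M x = det (M - x \<cdot>\<^sub>m 1\<^sub>m (dim_row M))"

definition coronal :: "real mat \<Rightarrow> real \<Rightarrow> real" where
  "coronal M x = (let B = the (mat_inverse (M - x \<cdot>\<^sub>m 1\<^sub>m (dim_row M)))
                  in \<Sum>i<dim_row M. \<Sum>j<dim_row M. B $$ (i,j))"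

definition corona_b :: "nat \<Rightarrow> nat \<Rightarrow> real" where
  "corona_b m k = (if k < 2 then 0 else real ((m - 1) choose (k - 2)))"

definition corona_mat :: "nat \<Rightarrow> nat set set \<Rightarrow> nat \<Rightarrow> nat set set \<Rightarrow> nat \<Rightarrow> real mat" where
  "corona_mat n E0 m E1 k = (let b = corona_b m k in
     four_block_mat (hyp_adj n E0) (b \<cdot>\<^sub>m kron (ones_mat 1 m) (1\<^sub>m n))
                    (b \<cdot>\<^sub>m kron (ones_mat m 1) (1\<^sub>m n)) (kron (hyp_adj m E1) (1\<^sub>m n)))"

end

theory Submission
  imports Defs
begin

(* Write K = A(G_1) - lambda I and J for the all-ones row.  The corona matrix minus lambda I
   is a block matrix whose lower right block K \<otimes> I_n is invertible, with inverse
   K^-1 \<otimes> I_n, as lambda is not an eigenvalue.  The Schur complement formula gives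
   det (K \<otimes> I_n) * det (A(G_0) - lambda I - b^2 (J K^-1 J^T) \<otimes> I_n), and
   J K^-1 J^T is the 1 x 1 matrix chi(lambda).  Finally, conjugation by the perfect shuffle
   turns K \<otimes> I_n into the block diagonal matrix I_n \<otimes> K, so det (K \<otimes> I_n) = det K ^ n. *)

lemma sum_lessThan_mult_split:
  fixes f :: "nat \<Rightarrow> 'a::comm_monoid_add"
  shows "(\<Sum>k<c * n. f k) = (\<Sum>u<c. \<Sum>v<n. f (u * n + v))"
proof -
  have "(\<Sum>k<c * n. f k) = (\<Sum>u<c. sum f {u * n..<u * n + n})"
    by (simp add: sum.nat_group)
  also have "\<dots> = (\<Sum>u<c. \<Sum>v<n. f (u * n + v))"
  proof (rule sum.cong [OF refl])
    fix u
    show "sum f {u * n..<u * n + n} = (\<Sum>v<n. f (u * n + v))"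
      using sum.shift_bounds_nat_ivl[of f 0 "u * n" n] by (simp add: atLeast0LessThan add.commute)
  qed
  finally show ?thesis .
qed

lemma dim_kron [simp]:
  "dim_row (kron A B) = dim_row A * dim_row B"
  "dim_col (kron A B) = dim_col A * dim_col B"
  by (simp_all add: kron_def)

lemma kron_carrier_mat [simp]:
  "A \<in> carrier_mat a b \<Longrightarrow> B \<in> carrier_mat c d \<Longrightarrow> kron A B \<in> carrier_mat (a * c) (b * d)"
  by (intro carrier_matI) auto

lemma index_kron_one_right:
  fixes A :: "'a::semiring_1 mat"
  assumes "i < dim_row A * n" "j < dim_col A * n"
  shows "kron A (1\<^sub>m n) $$ (i, j) = (if i mod n = j mod n then A $$ (i div n, j div n) else 0)"
proof -
  have "n > 0" using assms by (cases n) auto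
  then show ?thesis using assms by (simp add: kron_def)
qed

lemma index_kron_one_left:
  fixes B :: "'a::semiring_1 mat"
  assumes "i < n * dim_row B" "j < n * dim_col B"
  shows "kron (1\<^sub>m n) B $$ (i, j) =
    (if i div dim_row B = j div dim_col B then B $$ (i mod dim_row B, j mod dim_col B) else 0)"
proof -
  have "i div dim_row B < n" "j div dim_col B < n"
    using assms by (simp_all add: less_mult_imp_div_less mult.commute)
  then show ?thesis using assms by (simp add: kron_def)
qed

lemma kron_one_right_mult:
  fixes A B :: "'a::comm_semiring_1 mat"
  assumes A: "A \<in> carrier_mat a c" and B: "B \<in> carrier_mat c d"
  shows "kron A (1\<^sub>m n) * kron B (1\<^sub>m n) = kron (A * B) (1\<^sub>m n)"
proof (rule eq_matI)
  fix i j assume "i < dim_row (kron (A * B) (1\<^sub>m n))" "j < dim_col (kron (A * B) (1\<^sub>m n))"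
  then have i: "i < a * n" and j: "j < d * n" using A B by auto
  then have "n > 0" by (cases n) auto
  have block_index: "u * n + v < c * n" "(u * n + v) div n = u" "(u * n + v) mod n = v"
    if "u < c" "v < n" for u v
  proof -
    have "u * n + v < u * n + n" using that by simp
    also have "\<dots> = Suc u * n" by simp
    also have "\<dots> \<le> c * n" using that by (intro mult_right_mono) auto
    finally show "u * n + v < c * n" .
  qed (use that in auto)
  have "(kron A (1\<^sub>m n) * kron B (1\<^sub>m n)) $$ (i, j)
      = (\<Sum>k<c * n. kron A (1\<^sub>m n) $$ (i, k) * kron B (1\<^sub>m n) $$ (k, j))"
    using i j A B by (simp add: scalar_prod_def atLeast0LessThan)
  also have "\<dots> = (\<Sum>u<c. \<Sum>v<n. (if v = i mod n then
      (if i mod n = j mod n then A $$ (i div n, u) * B $$ (u, j div n) else 0) else 0))"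
    unfolding sum_lessThan_mult_split
    by (intro sum.cong refl) (use i j A B block_index in \<open>auto simp: index_kron_one_right\<close>)
  also have "\<dots> = (if i mod n = j mod n then \<Sum>u<c. A $$ (i div n, u) * B $$ (u, j div n) else 0)"
    using \<open>n > 0\<close> by (simp add: sum.delta)
  also have "\<dots> = kron (A * B) (1\<^sub>m n) $$ (i, j)"
    using i j A B by (simp add: index_kron_one_right scalar_prod_def atLeast0LessThan
        less_mult_imp_div_less)
  finally show "(kron A (1\<^sub>m n) * kron B (1\<^sub>m n)) $$ (i, j) = kron (A * B) (1\<^sub>m n) $$ (i, j)" .
qed (use A B in auto)

lemma nat_eq_iff_div_mod_eq: "(i::nat) = j \<longleftrightarrow> i div n = j div n \<and> i mod n = j mod n"
  by (metis div_mult_mod_eq)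

lemma kron_one_one: "kron (1\<^sub>m m) (1\<^sub>m n) = (1\<^sub>m (m * n) :: 'a::semiring_1 mat)"
proof (rule eq_matI)
  fix i j assume "i < dim_row (1\<^sub>m (m * n) :: 'a mat)" "j < dim_col (1\<^sub>m (m * n) :: 'a mat)"
  then show "kron (1\<^sub>m m) (1\<^sub>m n) $$ (i, j) = (1\<^sub>m (m * n) :: 'a mat) $$ (i, j)"
    using nat_eq_iff_div_mod_eq[of i j n] by (auto simp: index_kron_one_right less_mult_imp_div_less)
qed auto

lemma kron_one_right_minus_smult_one:
  fixes A :: "'a::comm_ring_1 mat"
  assumes A: "A \<in> carrier_mat m m"
  shows "kron (A - x \<cdot>\<^sub>m 1\<^sub>m m) (1\<^sub>m n) = kron A (1\<^sub>m n) - x \<cdot>\<^sub>m 1\<^sub>m (m * n)"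
proof (rule eq_matI)
  fix i j assume "i < dim_row (kron A (1\<^sub>m n) - x \<cdot>\<^sub>m 1\<^sub>m (m * n))"
    and "j < dim_col (kron A (1\<^sub>m n) - x \<cdot>\<^sub>m 1\<^sub>m (m * n))"
  then show "kron (A - x \<cdot>\<^sub>m 1\<^sub>m m) (1\<^sub>m n) $$ (i, j) = (kron A (1\<^sub>m n) - x \<cdot>\<^sub>m 1\<^sub>m (m * n)) $$ (i, j)"
    using A nat_eq_iff_div_mod_eq[of i j n] by (auto simp: index_kron_one_right less_mult_imp_div_less)
qed (use A in auto)

lemma kron_one_right_1x1:
  fixes A :: "'a::semiring_1 mat"
  assumes "A \<in> carrier_mat 1 1"
  shows "kron A (1\<^sub>m n) = A $$ (0, 0) \<cdot>\<^sub>m 1\<^sub>m n"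
  by (rule eq_matI) (use assms in \<open>auto simp: index_kron_one_right\<close>)

lemma four_block_mat_minus_smult_one:
  fixes A :: "'a::ring_1 mat"
  assumes "A \<in> carrier_mat n n" "B \<in> carrier_mat n k" "C \<in> carrier_mat k n" "D \<in> carrier_mat k k"
  shows "four_block_mat A B C D - x \<cdot>\<^sub>m 1\<^sub>m (n + k) =
    four_block_mat (A - x \<cdot>\<^sub>m 1\<^sub>m n) B C (D - x \<cdot>\<^sub>m 1\<^sub>m k)"
  by (rule eq_matI) (use assms in auto)

lemma det_kron_one_left:
  fixes K :: "'a::idom mat"
  assumes K: "K \<in> carrier_mat m m"
  shows "det (kron (1\<^sub>m n) K) = det K ^ n"
proof (induction n)
  case 0
  show ?case by (simp add: det_def)
next
  case (Suc n)
  have "kron (1\<^sub>m (Suc n)) K = four_block_mat K (0\<^sub>m m (n * m)) (0\<^sub>m (n * m) m) (kron (1\<^sub>m n) K)"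
  proof (rule eq_matI)
    fix i j
    assume "i < dim_row (four_block_mat K (0\<^sub>m m (n * m)) (0\<^sub>m (n * m) m) (kron (1\<^sub>m n) K))"
      and "j < dim_col (four_block_mat K (0\<^sub>m m (n * m)) (0\<^sub>m (n * m) m) (kron (1\<^sub>m n) K))"
    then have i: "i < m + n * m" and j: "j < m + n * m" using K by auto
    then have "m > 0" by (cases m) auto
    then show "kron (1\<^sub>m (Suc n)) K $$ (i, j) =
      four_block_mat K (0\<^sub>m m (n * m)) (0\<^sub>m (n * m) m) (kron (1\<^sub>m n) K) $$ (i, j)"
      using i j K by (auto simp: index_kron_one_left le_div_geq le_mod_geq not_less)
  qed (use K in auto)
  also have "det \<dots> = det K * det (kron (1\<^sub>m n) K)"
    by (rule det_four_block_mat_upper_right_zero[OF K refl]) (use K in auto)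
  finally show ?case using Suc.IH by simp
qed

lemma det_permute_rows_cols:
  fixes A :: "'a::comm_ring_1 mat"
  assumes A: "A \<in> carrier_mat n n" and p: "p permutes {0..<n}"
  shows "det (mat n n (\<lambda>(i, j). A $$ (p i, p j))) = det A"
proof -
  define B where "B = mat n n (\<lambda>(i, j). A $$ (i, p j))"
  have B: "B \<in> carrier_mat n n" by (simp add: B_def)
  have p_less: "i < n \<Longrightarrow> p i < n" for i using p by (simp add: permutes_in_image)
  have "transpose_mat B = mat n n (\<lambda>(i, j). transpose_mat A $$ (p i, j))"
    by (rule eq_matI) (use A p_less in \<open>auto simp: B_def\<close>)
  then have det_B: "det B = signof p * det A"
    using det_transpose[OF B] det_permute_rows[OF _ p, of "transpose_mat A"] det_transpose[OF A] A
    by auto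
  have "mat n n (\<lambda>(i, j). A $$ (p i, p j)) = mat n n (\<lambda>(i, j). B $$ (p i, j))"
    by (rule eq_matI) (auto simp: B_def p_less)
  then have "det (mat n n (\<lambda>(i, j). A $$ (p i, p j))) = signof p * (signof p * det A)"
    using det_permute_rows[OF B p] det_B by simp
  also have "\<dots> = det A"
    by (simp add: mult.assoc [symmetric] flip: of_int_mult)
  finally show ?thesis .
qed

lemma det_kron_one_right:
  fixes K :: "'a::idom mat"
  assumes K: "K \<in> carrier_mat m m"
  shows "det (kron K (1\<^sub>m n)) = det K ^ n"
proof -
  \<comment> \<open>the perfect shuffle, sending index \<open>u * m + v\<close> (\<open>v < m\<close>) to \<open>v * n + u\<close>\<close>
  define \<sigma> where "\<sigma> i = (if i < m * n then (i mod m) * n + i div m else i)" for i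
  have \<sigma>_less: "\<sigma> i < m * n" and \<sigma>_div: "\<sigma> i div n = i mod m" and \<sigma>_mod: "\<sigma> i mod n = i div m"
    if i: "i < m * n" for i
  proof -
    have "i div m < n" using i by (simp add: less_mult_imp_div_less mult.commute)
    moreover have "i mod m < m" using i by (cases m) auto
    ultimately have "(i mod m) * n + i div m < Suc (i mod m) * n" by simp
    also have "\<dots> \<le> m * n" using \<open>i mod m < m\<close> by (intro mult_right_mono) auto
    finally show "\<sigma> i < m * n" using i by (simp add: \<sigma>_def)
    show "\<sigma> i div n = i mod m" "\<sigma> i mod n = i div m" using i \<open>i div m < n\<close> by (simp_all add: \<sigma>_def)
  qed
  have "\<sigma> permutes {0..<m * n}"
  proof (rule inj_on_nat_permutes)
    show "inj_on \<sigma> {0..<m * n}"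
      by (rule inj_onI) (metis atLeastLessThan_iff div_mult_mod_eq \<sigma>_div \<sigma>_mod)
    show "\<sigma> \<in> {0..<m * n} \<rightarrow> {0..<m * n}" using \<sigma>_less by auto
  qed (auto simp: \<sigma>_def)
  moreover have "mat (m * n) (m * n) (\<lambda>(i, j). kron K (1\<^sub>m n) $$ (\<sigma> i, \<sigma> j)) = kron (1\<^sub>m n) K"
    by (rule eq_matI) (use K in \<open>auto simp: index_kron_one_right index_kron_one_left
        \<sigma>_less \<sigma>_div \<sigma>_mod mult.commute\<close>)
  ultimately have "det (kron K (1\<^sub>m n)) = det (kron (1\<^sub>m n) K)"
    using det_permute_rows_cols[of "kron K (1\<^sub>m n)" "m * n" \<sigma>] K by simp
  then show ?thesis using det_kron_one_left[OF K] by simp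
qed

lemma det_schur_complement:
  fixes A :: "'a::idom mat"
  assumes A: "A \<in> carrier_mat n n" and B: "B \<in> carrier_mat n k" and C: "C \<in> carrier_mat k n"
    and D: "D \<in> carrier_mat k k" and D': "D' \<in> carrier_mat k k" and inv: "D * D' = 1\<^sub>m k"
  shows "det (four_block_mat A B C D) = det (A - B * D' * C) * det D"
proof -
  define S where "S = A - B * D' * C"
  have S: "S \<in> carrier_mat n n"
    unfolding S_def using A B C D' by (meson minus_carrier_mat mult_carrier_mat)
  have D'C: "D' * C \<in> carrier_mat k n" using D' C by simp
  have "S + B * (D' * C) = A"
    unfolding S_def assoc_mult_mat[OF B D' C, symmetric]
    by (rule eq_matI) (use A B C D' in auto)
  moreover have "D * (D' * C) = C"
    using assoc_mult_mat[OF D D' C, symmetric] inv C by simp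
  ultimately have factor: "four_block_mat A B C D =
      four_block_mat S B (0\<^sub>m k n) D * four_block_mat (1\<^sub>m n) (0\<^sub>m n k) (D' * C) (1\<^sub>m k)"
    using mult_four_block_mat[OF S B zero_carrier_mat D one_carrier_mat zero_carrier_mat D'C one_carrier_mat]
      S B C D D'C by simp
  have "det (four_block_mat A B C D) =
      det (four_block_mat S B (0\<^sub>m k n) D) * det (four_block_mat (1\<^sub>m n) (0\<^sub>m n k) (D' * C) (1\<^sub>m k))"
    unfolding factor using S D D'C by (intro det_mult) auto
  also have "\<dots> = det S * det D"
    using det_four_block_mat_lower_left_zero[OF S B refl D]
      det_four_block_mat_upper_right_zero[OF one_carrier_mat refl D'C one_carrier_mat] by simp
  finally show ?thesis unfolding S_def .
qed

lemma ones_inverse_ones_eq_coronal: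
  assumes A: "A \<in> carrier_mat m m" and R: "mat_inverse (A - x \<cdot>\<^sub>m 1\<^sub>m m) = Some R"
  shows "(ones_mat 1 m * R * ones_mat m 1) $$ (0, 0) = coronal A x"
proof -
  have "A - x \<cdot>\<^sub>m 1\<^sub>m m \<in> carrier_mat m m" by (simp add: minus_carrier_mat)
  then have "R \<in> carrier_mat m m" using mat_inverse(2)[OF _ R] by auto
  then have "(ones_mat 1 m * R * ones_mat m 1) $$ (0, 0) = (\<Sum>j<m. \<Sum>i<m. R $$ (i, j))"
    by (simp add: ones_mat_def scalar_prod_def atLeast0LessThan)
  also have "\<dots> = (\<Sum>i<m. \<Sum>j<m. R $$ (i, j))" by (rule sum.swap)
  finally show ?thesis using A R by (simp add: coronal_def Let_def)
qed

lemma kron_ones_inverse_kron_ones: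
  fixes A :: "real mat"
  assumes A: "A \<in> carrier_mat m m" and R: "mat_inverse (A - x \<cdot>\<^sub>m 1\<^sub>m m) = Some R"
  shows "(b \<cdot>\<^sub>m kron (ones_mat 1 m) (1\<^sub>m n)) * kron R (1\<^sub>m n) * (b \<cdot>\<^sub>m kron (ones_mat m 1) (1\<^sub>m n))
    = (b\<^sup>2 * coronal A x) \<cdot>\<^sub>m 1\<^sub>m n"
proof -
  define J1 where "J1 = kron (ones_mat 1 m) (1\<^sub>m n)"
  define Jm where "Jm = kron (ones_mat m 1) (1\<^sub>m n)"
  have ones: "ones_mat 1 m \<in> carrier_mat 1 m" "ones_mat m 1 \<in> carrier_mat m 1"
    by (simp_all add: ones_mat_def)
  have J1: "J1 \<in> carrier_mat n (m * n)" and Jm: "Jm \<in> carrier_mat (m * n) n"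
    unfolding J1_def Jm_def
    using kron_carrier_mat[OF ones(1) one_carrier_mat, of n] kron_carrier_mat[OF ones(2) one_carrier_mat, of n]
    by auto
  have "A - x \<cdot>\<^sub>m 1\<^sub>m m \<in> carrier_mat m m" by (simp add: minus_carrier_mat)
  then have R_carrier: "R \<in> carrier_mat m m" using mat_inverse(2)[OF _ R] by auto
  then have kron_R: "kron R (1\<^sub>m n) \<in> carrier_mat (m * n) (m * n)" by simp
  then have J1R: "J1 * kron R (1\<^sub>m n) \<in> carrier_mat n (m * n)" using J1 by simp
  have "(b \<cdot>\<^sub>m J1) * kron R (1\<^sub>m n) * (b \<cdot>\<^sub>m Jm) = b \<cdot>\<^sub>m (b \<cdot>\<^sub>m (J1 * kron R (1\<^sub>m n) * Jm))"
    by (simp only: mult_smult_assoc_mat[OF J1 kron_R] mult_smult_distrib[OF J1R Jm]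
        mult_smult_assoc_mat[OF J1R smult_carrier_mat[OF Jm]])
  also have "J1 * kron R (1\<^sub>m n) * Jm = kron (ones_mat 1 m * R * ones_mat m 1) (1\<^sub>m n)"
    unfolding J1_def Jm_def
    by (simp only: kron_one_right_mult[OF ones(1) R_carrier]
        kron_one_right_mult[OF mult_carrier_mat[OF ones(1) R_carrier] ones(2)])
  also have "\<dots> = coronal A x \<cdot>\<^sub>m 1\<^sub>m n"
  proof -
    have "ones_mat 1 m * R * ones_mat m 1 \<in> carrier_mat 1 1" using ones R_carrier by simp
    then show ?thesis by (simp only: kron_one_right_1x1 ones_inverse_ones_eq_coronal[OF A R])
  qed
  also have "b \<cdot>\<^sub>m (b \<cdot>\<^sub>m (coronal A x \<cdot>\<^sub>m 1\<^sub>m n)) = (b\<^sup>2 * coronal A x) \<cdot>\<^sub>m (1\<^sub>m n :: real mat)"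
    by (intro eq_matI) (auto simp: power2_eq_square)
  finally show ?thesis unfolding J1_def Jm_def .
qed

lemma charP_corona_block:
  fixes A0 A1 :: "real mat"
  assumes A0: "A0 \<in> carrier_mat n n" and A1: "A1 \<in> carrier_mat m m"
    and not_eigenvalue: "\<not> eigenvalue A1 x"
  shows "charP (four_block_mat A0 (b \<cdot>\<^sub>m kron (ones_mat 1 m) (1\<^sub>m n))
      (b \<cdot>\<^sub>m kron (ones_mat m 1) (1\<^sub>m n)) (kron A1 (1\<^sub>m n))) x =
    charP A1 x ^ n * charP A0 (x + b\<^sup>2 * coronal A1 x)"
proof -
  define K where "K = A1 - x \<cdot>\<^sub>m 1\<^sub>m m"
  define B where "B = b \<cdot>\<^sub>m kron (ones_mat 1 m) (1\<^sub>m n)"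
  define C where "C = b \<cdot>\<^sub>m kron (ones_mat m 1) (1\<^sub>m n)"
  have K: "K \<in> carrier_mat m m" using A1 by (simp add: K_def minus_carrier_mat)
  have B: "B \<in> carrier_mat n (m * n)" and C: "C \<in> carrier_mat (m * n) n"
    unfolding B_def C_def ones_mat_def
    using kron_carrier_mat[OF mat_carrier one_carrier_mat, of 1 m _ n]
      kron_carrier_mat[OF mat_carrier one_carrier_mat, of m 1 _ n]
    by auto
  have "char_matrix A1 x = K" using A1 by (intro eq_matI) (auto simp: char_matrix_def K_def)
  then have "det K \<noteq> 0" using not_eigenvalue eigenvalue_det[OF A1] by simp
  then obtain R where R: "mat_inverse K = Some R"
    using mat_inverse(1)[OF K] det_non_zero_imp_unit[OF K] by fastforce
  then have R_carrier: "R \<in> carrier_mat m m" and KR: "K * R = 1\<^sub>m m"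
    using mat_inverse(2)[OF K] by auto
  have inverse: "kron K (1\<^sub>m n) * kron R (1\<^sub>m n) = 1\<^sub>m (m * n)"
    using kron_one_right_mult[OF K R_carrier] KR kron_one_one by simp
  have "charP (four_block_mat A0 B C (kron A1 (1\<^sub>m n))) x
      = det (four_block_mat (A0 - x \<cdot>\<^sub>m 1\<^sub>m n) B C (kron K (1\<^sub>m n)))"
    using A0 A1 B C
    by (simp add: charP_def four_block_mat_minus_smult_one K_def kron_one_right_minus_smult_one)
  also have "\<dots> = det (A0 - x \<cdot>\<^sub>m 1\<^sub>m n - B * kron R (1\<^sub>m n) * C) * det (kron K (1\<^sub>m n))"
    using A0 B C K R_carrier inverse by (intro det_schur_complement) auto
  also have "B * kron R (1\<^sub>m n) * C = (b\<^sup>2 * coronal A1 x) \<cdot>\<^sub>m 1\<^sub>m n"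
    unfolding B_def C_def using kron_ones_inverse_kron_ones[OF A1 R[unfolded K_def]] .
  also have "A0 - x \<cdot>\<^sub>m 1\<^sub>m n - (b\<^sup>2 * coronal A1 x) \<cdot>\<^sub>m 1\<^sub>m n = A0 - (x + b\<^sup>2 * coronal A1 x) \<cdot>\<^sub>m 1\<^sub>m n"
    using A0 by (intro eq_matI) (auto simp: algebra_simps)
  finally show ?thesis
    using A0 A1 det_kron_one_right[OF K] by (simp add: charP_def B_def C_def K_def)
qed

theorem theorem4p4:
  fixes n m k :: nat and E0 E1 :: "nat set set" and x :: real
  assumes "hypergraph n E0" and "k_uniform k E0"
    and "hypergraph m E1" and "k_uniform k E1"
    and "\<not> eigenvalue (hyp_adj m E1) x"
  shows "charP (corona_mat n E0 m E1 k) x =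
         (charP (hyp_adj m E1) x) ^ n *
         charP (hyp_adj n E0) (x + (corona_b m k)^2 * coronal (hyp_adj m E1) x)"
  \<comment> \<open>only the eigenvalue hypothesis is needed; the identity holds for arbitrary square matrices\<close>
  unfolding corona_mat_def Let_def
  by (rule charP_corona_block) (use assms(5) in \<open>simp_all add: hyp_adj_def\<close>)

end
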